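(* Let $n$ entities move in $\mathbb{R}^1$ along piecewise-linear trajectories $\sigma:[t_0,t_\tau]\to\mathbb{R}$ whose vertices are all at the common times $t_0<t_1<\dots<t_\tau$. Let $\mathcal{U}(t)=\max_\sigma \sigma(t)$, $\mathcal{L}(t)=\min_\sigma\sigma(t)$ and $\mathcal{I}(t)=(\mathcal{U}(t)+\mathcal{L}(t))/2$. Subdivide each interval $[t_i,t_{i+1}]$ into maximal subintervals (elementary intervals) on which $\mathcal{I}$ is a single linear function. Then the total number of elementary intervals over all of $[t_0,t_\tau]$ is at most $\tau(n+2)$.
   Context: $\mathcal{I}$ is called the ideal trajectory; it is the pointwise midpoint of the highest and lowest entity. *)

theory Defs
  imports Complex_Main
begin

definition affine_on :: "(real \<Rightarrow> real) \<Rightarrow> real set \<Rightarrow> bool" where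
  "affine_on f S \<longleftrightarrow> (\<exists>c d. \<forall>x\<in>S. f x = c * x + d)"

definition upper_env :: "nat \<Rightarrow> (nat \<Rightarrow> real \<Rightarrow> real) \<Rightarrow> real \<Rightarrow> real" where
  "upper_env n traj x = Max ((\<lambda>k. traj k x) ` {..<n})"

definition lower_env :: "nat \<Rightarrow> (nat \<Rightarrow> real \<Rightarrow> real) \<Rightarrow> real \<Rightarrow> real" where
  "lower_env n traj x = Min ((\<lambda>k. traj k x) ` {..<n})"

definition ideal_traj :: "nat \<Rightarrow> (nat \<Rightarrow> real \<Rightarrow> real) \<Rightarrow> real \<Rightarrow> real" where
  "ideal_traj n traj x = (upper_env n traj x + lower_env n traj x) / 2"

text \<open>Number of elementary intervals of \<open>f\<close> on \<open>[a,b]\<close>: the number of maximal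
  subintervals on which \<open>f\<close> is a single linear function, i.e. the least number
  of pieces of a subdivision \<open>a = s 0 < s 1 < ... < s k = b\<close> such that \<open>f\<close> is
  affine on every piece.\<close>
definition elem_intervals :: "(real \<Rightarrow> real) \<Rightarrow> real \<Rightarrow> real \<Rightarrow> nat" where
  "elem_intervals f a b = (LEAST k. \<exists>s::nat \<Rightarrow> real.
      s 0 = a \<and> s k = b \<and> (\<forall>j<k. s j < s (Suc j)) \<and>
      (\<forall>j<k. affine_on f {s j..s (Suc j)}))"

end

theory Submission
  imports Defs
begin

(* Between two consecutive times all trajectories are lines, and the ideal trajectory can change
   its linear piece only where the upper or the lower envelope does, i.e. where two lines of
   different slopes are simultaneously on top (resp. at the bottom). Charge such a breakpoint of
   the upper envelope to the top line of least slope, which is overtaken there and never returns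
   to the top, and a breakpoint of the lower envelope to the bottom line of greatest slope. No line
   is charged twice, and no line can both leave the top and leave the bottom, so there are at most
   n interior breakpoints and hence at most n + 1 elementary intervals per time step. *)

lemma line_le_between:
  fixes c1 d1 c2 d2 m x z :: real
  assumes "c1 * m + d1 \<le> c2 * m + d2" "c1 * z + d1 \<le> c2 * z + d2" "m \<le> x" "x \<le> z"
  shows "c1 * x + d1 \<le> c2 * x + d2"
proof (cases "c1 \<le> c2")
  case True
  then have "0 \<le> (c2 - c1) * (x - m)" using assms by simp
  then show ?thesis using assms(1) by (simp add: algebra_simps)
next
  case False
  then have "0 \<le> (c1 - c2) * (z - x)" using assms by simp
  then show ?thesis using assms(2) by (simp add: algebra_simps)
qed

lemma line_less_right_of_meet:
  fixes c1 d1 c2 d2 x y :: real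
  assumes "c1 * x + d1 = c2 * x + d2" "c1 < c2" "x < y"
  shows "c1 * y + d1 < c2 * y + d2"
proof -
  have "0 < (c2 - c1) * (y - x)" using assms by simp
  then show ?thesis using assms(1) by (simp add: algebra_simps)
qed

lemma line_less_left_of_meet:
  fixes c1 d1 c2 d2 x y :: real
  assumes "c1 * x + d1 = c2 * x + d2" "c1 < c2" "y < x"
  shows "c2 * y + d2 < c1 * y + d1"
proof -
  have "0 < (c2 - c1) * (x - y)" using assms by simp
  then show ?thesis using assms(1) by (simp add: algebra_simps)
qed

lemma line_overtakes_imp_steeper:
  fixes c1 d1 c2 d2 m z :: real
  assumes "c1 * m + d1 \<le> c2 * m + d2" "m < z" "c2 * z + d2 < c1 * z + d1"
  shows "c2 < c1"
proof (rule ccontr)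
  assume "\<not> c2 < c1"
  then have "0 \<le> (c2 - c1) * (z - m)" using \<open>m < z\<close> by simp
  then show False using assms by (simp add: algebra_simps)
qed

lemma line_le_iff_le_crossing:
  fixes c1 d1 c2 d2 x :: real
  assumes "c2 < c1"
  shows "c1 * x + d1 \<le> c2 * x + d2 \<longleftrightarrow> x \<le> (d2 - d1) / (c1 - c2)"
  using assms by (simp add: pos_le_divide_eq algebra_simps)

lemma line_eq_at_crossing:
  fixes c1 d1 c2 d2 :: real
  assumes "c1 \<noteq> c2"
  shows "c1 * ((d2 - d1) / (c1 - c2)) + d1 = c2 * ((d2 - d1) / (c1 - c2)) + d2"
  using assms by (simp add: field_simps)

definition top_line :: "'i set \<Rightarrow> ('i \<Rightarrow> real) \<Rightarrow> ('i \<Rightarrow> real) \<Rightarrow> real \<Rightarrow> 'i \<Rightarrow> bool" where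
  "top_line I c d x i \<longleftrightarrow> i \<in> I \<and> (\<forall>j\<in>I. c j * x + d j \<le> c i * x + d i)"

(* Breakpoints of the lower envelope are those of the upper envelope of the negated lines (- c, - d). *)
definition upper_break :: "'i set \<Rightarrow> ('i \<Rightarrow> real) \<Rightarrow> ('i \<Rightarrow> real) \<Rightarrow> real \<Rightarrow> bool" where
  "upper_break I c d x \<longleftrightarrow> (\<exists>i j. top_line I c d x i \<and> top_line I c d x j \<and> c i \<noteq> c j)"

lemma top_lines_meet:
  "top_line I c d x i \<Longrightarrow> top_line I c d x j \<Longrightarrow> c i * x + d i = c j * x + d j"
  by (auto simp: top_line_def intro: order.antisym)

lemma top_line_reflect: "top_line I c d x i \<longleftrightarrow> top_line I (- c) d (- x) i"
  by (simp add: top_line_def)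

lemma upper_break_reflect: "upper_break I c d x \<longleftrightarrow> upper_break I (- c) d (- x)"
  by (simp add: upper_break_def top_line_reflect[of I c d x])

lemma ex_top_line:
  assumes "finite I" "I \<noteq> {}"
  obtains i where "top_line I c d x i"
proof -
  obtain i where "i \<in> I" "\<And>j. j \<in> I \<Longrightarrow> c j * x + d j \<le> c i * x + d i"
    using arg_min_if_finite[OF assms, of "\<lambda>k. - (c k * x + d k)"] by force
  then show ?thesis using that by (auto simp: top_line_def)
qed

lemma top_line_persists_right:
  assumes "finite I" and top: "top_line I c d m g" and "m < z"
    and no_break: "\<And>x. m \<le> x \<Longrightarrow> x < z \<Longrightarrow> \<not> upper_break I c d x"
  shows "top_line I c d z g"
proof (rule ccontr)
  assume "\<not> top_line I c d z g"
  define K where "K = {k \<in> I. c g * z + d g < c k * z + d k}"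
  define cross where "cross k = (d g - d k) / (c k - c g)" for k
  have g: "g \<in> I" and below_m: "\<And>j. j \<in> I \<Longrightarrow> c j * m + d j \<le> c g * m + d g"
    using top by (auto simp: top_line_def)
  have "K \<noteq> {}" using \<open>\<not> top_line I c d z g\<close> g by (auto simp: top_line_def K_def not_le)
  have "finite K" using \<open>finite I\<close> by (simp add: K_def)
  have steeper: "c g < c k" if "k \<in> K" for k
    using line_overtakes_imp_steeper[OF below_m \<open>m < z\<close>] that by (auto simp: K_def)
  have below_iff: "c k * x + d k \<le> c g * x + d g \<longleftrightarrow> x \<le> cross k" if "k \<in> K" for k x
    using line_le_iff_le_crossing[OF steeper[OF that]] by (simp add: cross_def)
  \<comment> \<open>\<open>x0\<close> is the first point where one of the lines above \<open>g\<close> at \<open>z\<close> catches up with \<open>g\<close>.\<close>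
  define k0 where "k0 = arg_min_on cross K"
  define x0 where "x0 = cross k0"
  have "k0 \<in> K" using arg_min_if_finite(1)[OF \<open>finite K\<close> \<open>K \<noteq> {}\<close>] by (simp add: k0_def)
  have first: "x0 \<le> cross k" if "k \<in> K" for k
    using arg_min_least[OF \<open>finite K\<close> \<open>K \<noteq> {}\<close> that] by (simp add: x0_def k0_def)
  have "m \<le> x0" using below_iff[OF \<open>k0 \<in> K\<close>, of m] below_m[of k0] \<open>k0 \<in> K\<close> by (simp add: x0_def K_def)
  have "x0 < z" using below_iff[OF \<open>k0 \<in> K\<close>, of z] \<open>k0 \<in> K\<close> by (auto simp: x0_def K_def)
  have g_top: "top_line I c d x0 g"
    unfolding top_line_def
  proof (intro conjI ballI)
    fix j assume "j \<in> I"
    show "c j * x0 + d j \<le> c g * x0 + d g"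
    proof (cases "j \<in> K")
      case True
      then show ?thesis using below_iff first by simp
    next
      case False
      then have "c j * z + d j \<le> c g * z + d g" using \<open>j \<in> I\<close> by (auto simp: K_def)
      then show ?thesis
        using line_le_between below_m \<open>j \<in> I\<close> \<open>m \<le> x0\<close> \<open>x0 < z\<close> by (meson less_imp_le)
    qed
  qed (fact g)
  have "c k0 * x0 + d k0 = c g * x0 + d g"
    using line_eq_at_crossing steeper[OF \<open>k0 \<in> K\<close>] by (simp add: x0_def cross_def)
  then have "top_line I c d x0 k0" using g_top \<open>k0 \<in> K\<close> by (simp add: top_line_def K_def)
  then have "upper_break I c d x0"
    using g_top steeper[OF \<open>k0 \<in> K\<close>] unfolding upper_break_def by force
  then show False using no_break \<open>m \<le> x0\<close> \<open>x0 < z\<close> by blast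
qed

lemma top_line_persists_left:
  assumes "finite I" and top: "top_line I c d m g" and "z < m"
    and no_break: "\<And>x. z < x \<Longrightarrow> x \<le> m \<Longrightarrow> \<not> upper_break I c d x"
  shows "top_line I c d z g"
proof -
  have "top_line I (- c) d (- z) g"
  proof (rule top_line_persists_right[OF \<open>finite I\<close>])
    show "top_line I (- c) d (- m) g" using top top_line_reflect[of I c d m g] by simp
    show "- m < - z" using \<open>z < m\<close> by simp
    show "\<not> upper_break I (- c) d x" if "- m \<le> x" "x < - z" for x
      using no_break[of "- x"] that upper_break_reflect[of I c d "- x"] by simp
  qed
  then show ?thesis using top_line_reflect[of I c d z g] by simp
qed

lemma common_top_line:
  assumes "finite I" "I \<noteq> {}" "p < q"
    and no_break: "\<And>x. p < x \<Longrightarrow> x < q \<Longrightarrow> \<not> upper_break I c d x"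
  obtains g where "\<And>x. x \<in> {p..q} \<Longrightarrow> top_line I c d x g"
proof -
  define m where "m = (p + q) / 2"
  have "p < m" "m < q" using \<open>p < q\<close> by (simp_all add: m_def)
  obtain g where g: "top_line I c d m g" using ex_top_line[OF \<open>finite I\<close> \<open>I \<noteq> {}\<close>] .
  have "top_line I c d x g" if "x \<in> {p..q}" for x
  proof (cases x m rule: linorder_cases)
    case less
    show ?thesis
      by (rule top_line_persists_left[OF \<open>finite I\<close> g less]) (use no_break that \<open>m < q\<close> in auto)
  next
    case equal
    then show ?thesis using g by simp
  next
    case greater
    show ?thesis
      by (rule top_line_persists_right[OF \<open>finite I\<close> g greater]) (use no_break that \<open>p < m\<close> in auto)
  qed
  then show ?thesis using that by blast
qed

(* At a breakpoint the top line of least slope is overtaken by a steeper top line, so it is never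
   on top again further right: each line leaves the top at most once. *)
definition leaving_line :: "'i set \<Rightarrow> ('i \<Rightarrow> real) \<Rightarrow> ('i \<Rightarrow> real) \<Rightarrow> real \<Rightarrow> 'i" where
  "leaving_line I c d x = arg_min_on c {i. top_line I c d x i}"

lemma
  assumes "finite I" "upper_break I c d x"
  shows top_line_leaving_line: "top_line I c d x (leaving_line I c d x)"
    and leaving_line_least_slope: "\<And>j. top_line I c d x j \<Longrightarrow> c (leaving_line I c d x) \<le> c j"
    and leaving_line_steeper_top: "\<exists>j. top_line I c d x j \<and> c (leaving_line I c d x) < c j"
proof -
  let ?T = "{i. top_line I c d x i}"
  have "finite ?T" using \<open>finite I\<close> by (rule finite_subset[rotated]) (auto simp: top_line_def)
  moreover obtain i j where ij: "top_line I c d x i" "top_line I c d x j" "c i \<noteq> c j"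
    using assms(2) by (auto simp: upper_break_def)
  ultimately have "?T \<noteq> {}" by auto
  have least: "c (arg_min_on c ?T) \<le> c k" if "top_line I c d x k" for k
    using arg_min_least[OF \<open>finite ?T\<close> \<open>?T \<noteq> {}\<close>] that by simp
  show "top_line I c d x (leaving_line I c d x)"
    using arg_min_if_finite(1)[OF \<open>finite ?T\<close> \<open>?T \<noteq> {}\<close>] by (simp add: leaving_line_def)
  show "c (leaving_line I c d x) \<le> c j" if "top_line I c d x j" for j
    using least that by (simp add: leaving_line_def)
  show "\<exists>j. top_line I c d x j \<and> c (leaving_line I c d x) < c j"
  proof -
    have "c (leaving_line I c d x) < c i \<or> c (leaving_line I c d x) < c j"
      using least[of i] least[of j] ij by (auto simp: leaving_line_def)
    then show ?thesis using ij by blast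
  qed
qed

lemma inj_on_leaving_line:
  assumes "finite I"
  shows "inj_on (leaving_line I c d) {x. upper_break I c d x}"
proof (rule linorder_inj_onI')
  fix x y assume "x \<in> {x. upper_break I c d x}" "y \<in> {x. upper_break I c d x}" "x < y"
  then have x: "upper_break I c d x" and y: "upper_break I c d y" by simp_all
  define i where "i = leaving_line I c d x"
  obtain j where j: "top_line I c d x j" "c i < c j"
    using leaving_line_steeper_top[OF assms x] by (auto simp: i_def)
  have "c i * x + d i = c j * x + d j"
    using top_lines_meet[OF top_line_leaving_line[OF assms x] j(1)] by (simp add: i_def)
  from line_less_right_of_meet[OF this j(2) \<open>x < y\<close>]
  have "c i * y + d i < c j * y + d j" .
  then have "\<not> top_line I c d y i" using j by (auto simp: top_line_def not_le)
  then show "leaving_line I c d x \<noteq> leaving_line I c d y"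
    using top_line_leaving_line[OF assms y] by (auto simp: i_def)
qed

lemma leaving_line_upper_ne_lower:
  assumes "finite I" and x: "upper_break I c d x" and y: "upper_break I (- c) (- d) y"
  shows "leaving_line I c d x \<noteq> leaving_line I (- c) (- d) y"
proof
  define i where "i = leaving_line I c d x"
  assume "i = leaving_line I (- c) (- d) y"
  then have i_bot: "top_line I (- c) (- d) y i"
    and h: "\<exists>h. top_line I (- c) (- d) y h \<and> - c i < - c h"
    using top_line_leaving_line[OF assms(1,3)] leaving_line_steeper_top[OF assms(1,3)] by simp_all
  then obtain h where h: "top_line I (- c) (- d) y h" "c h < c i" by auto
  have i_top: "top_line I c d x i" using top_line_leaving_line[OF assms(1,2)] by (simp add: i_def)
  obtain g where g: "top_line I c d x g" "c i < c g"
    using leaving_line_steeper_top[OF assms(1,2)] by (auto simp: i_def)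
  have "c h * y + d h = c i * y + d i" using top_lines_meet[OF h(1) i_bot] by simp
  have "c i * x + d i = c g * x + d g" using top_lines_meet[OF i_top g(1)] .
  show False
  proof (cases x y rule: linorder_cases)
    case less
    with line_less_left_of_meet[OF \<open>c h * y + d h = c i * y + d i\<close> h(2)]
    have "c i * x + d i < c h * x + d h" by blast
    then show False using i_top h(1) by (auto simp: top_line_def not_le)
  next
    case equal
    have "top_line I c d x h"
      using i_top i_bot h(1) equal \<open>c h * y + d h = c i * y + d i\<close> by (auto simp: top_line_def)
    then show False using leaving_line_least_slope[OF assms(1,2)] h(2) by (force simp: i_def)
  next
    case greater
    with line_less_left_of_meet[OF \<open>c i * x + d i = c g * x + d g\<close> g(2)]
    have "c g * y + d g < c i * y + d i" by blast
    then show False using i_bot g(1) by (auto simp: top_line_def not_le)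
  qed
qed

lemma leaving_line_in: "finite I \<Longrightarrow> upper_break I c d x \<Longrightarrow> leaving_line I c d x \<in> I"
  using top_line_leaving_line by (auto simp: top_line_def)

lemma finite_upper_breaks: "finite I \<Longrightarrow> finite {x. upper_break I c d x}"
  by (rule inj_on_finite[OF inj_on_leaving_line]) (auto intro: leaving_line_in)

lemma card_upper_lower_breaks_le:
  assumes "finite I"
  shows "card {x. upper_break I c d x} + card {x. upper_break I (- c) (- d) x} \<le> card I"
proof -
  let ?U = "{x. upper_break I c d x}" and ?L = "{x. upper_break I (- c) (- d) x}"
  let ?f = "leaving_line I c d" and ?g = "leaving_line I (- c) (- d)"
  have "card ?U + card ?L = card (?f ` ?U) + card (?g ` ?L)"
    using card_image inj_on_leaving_line[OF assms] by metis
  also have "\<dots> = card (?f ` ?U \<union> ?g ` ?L)"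
    using assms leaving_line_upper_ne_lower[OF assms]
    by (intro card_Un_disjoint[symmetric]) (auto intro: finite_upper_breaks)
  also have "\<dots> \<le> card I"
    using assms by (intro card_mono) (auto intro: leaving_line_in)
  finally show ?thesis .
qed

lemma elem_intervals_le:
  assumes "s 0 = a" "s k = b" "\<And>j. j < k \<Longrightarrow> s j < s (Suc j)"
    and "\<And>j. j < k \<Longrightarrow> affine_on f {s j..s (Suc j)}"
  shows "elem_intervals f a b \<le> k"
  unfolding elem_intervals_def by (rule Least_le) (use assms in blast)

lemma elem_intervals_le_card:
  assumes "finite S" "a \<in> S" "b \<in> S" "S \<subseteq> {a..b}"
    and affine: "\<And>u v. u \<in> S \<Longrightarrow> v \<in> S \<Longrightarrow> u < v \<Longrightarrow> {u<..<v} \<inter> S = {} \<Longrightarrow> affine_on f {u..v}"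
  shows "elem_intervals f a b \<le> card S - 1"
proof -
  define xs where "xs = sorted_list_of_set S"
  define k where "k = card S - 1"
  have set_xs: "set xs = S" and strict: "sorted_wrt (<) xs" using \<open>finite S\<close> by (simp_all add: xs_def)
  have "card S \<noteq> 0" using \<open>finite S\<close> \<open>a \<in> S\<close> by auto
  then have len: "length xs = Suc k" by (simp add: xs_def k_def)
  have in_S: "xs ! j \<in> S" if "j \<le> k" for j
    using that len set_xs by (metis less_Suc_eq_le nth_mem)
  have mono: "xs ! i \<le> xs ! j" if "i \<le> j" "j \<le> k" for i j
    using sorted_nth_mono[OF strict_sorted_imp_sorted[OF strict] that(1)] that len by simp
  have index: "\<exists>i\<le>k. xs ! i = y" if "y \<in> S" for y
    using that set_xs len by (metis in_set_conv_nth less_Suc_eq_le)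
  have "xs ! 0 = a"
  proof (rule order.antisym)
    show "xs ! 0 \<le> a" using mono[of 0] index[OF \<open>a \<in> S\<close>] by auto
    show "a \<le> xs ! 0" using in_S[of 0] \<open>S \<subseteq> {a..b}\<close> by auto
  qed
  moreover have "xs ! k = b"
  proof (rule order.antisym)
    show "xs ! k \<le> b" using in_S[of k] \<open>S \<subseteq> {a..b}\<close> by auto
    show "b \<le> xs ! k" using mono[of _ k] index[OF \<open>b \<in> S\<close>] by auto
  qed
  moreover have step: "xs ! j < xs ! Suc j" if "j < k" for j
    using sorted_wrt_nth_less[OF strict, of j "Suc j"] that len by simp
  moreover have "affine_on f {xs ! j..xs ! Suc j}" if "j < k" for j
  proof (rule affine)
    show "{xs ! j<..<xs ! Suc j} \<inter> S = {}"
    proof (intro equals0I)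
      fix y assume "y \<in> {xs ! j<..<xs ! Suc j} \<inter> S"
      then obtain i where "i \<le> k" "xs ! i = y" "xs ! j < y" "y < xs ! Suc j" using index by auto
      then show False using mono[of i j] mono[of "Suc j" i] that by (cases "i \<le> j") auto
    qed
  qed (use in_S step that in auto)
  ultimately show ?thesis unfolding k_def[symmetric] by (rule elem_intervals_le)
qed

lemma upper_env_eq_top_line:
  assumes "\<And>k. k < n \<Longrightarrow> traj k x = c k * x + d k" "top_line {..<n} c d x g"
  shows "upper_env n traj x = c g * x + d g"
  unfolding upper_env_def by (rule Max_eqI) (use assms in \<open>auto simp: top_line_def\<close>)

lemma lower_env_eq_bottom_line:
  assumes "\<And>k. k < n \<Longrightarrow> traj k x = c k * x + d k" "top_line {..<n} (- c) (- d) x h"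
  shows "lower_env n traj x = c h * x + d h"
  unfolding lower_env_def by (rule Min_eqI) (use assms in \<open>force simp: top_line_def\<close>)+

lemma affine_on_choice:
  assumes "\<And>k. k \<in> K \<Longrightarrow> affine_on (f k) S"
  obtains c d where "\<And>k x. k \<in> K \<Longrightarrow> x \<in> S \<Longrightarrow> f k x = c k * x + d k"
proof -
  have "\<forall>k. \<exists>p. k \<in> K \<longrightarrow> (\<forall>x\<in>S. f k x = fst p * x + snd p)"
    using assms by (auto simp: affine_on_def)
  then obtain p where "\<And>k x. k \<in> K \<Longrightarrow> x \<in> S \<Longrightarrow> f k x = fst (p k) * x + snd (p k)"
    by metis
  then show ?thesis using that[of "fst \<circ> p" "snd \<circ> p"] by simp
qed

lemma affine_on_ideal_traj:
  assumes "0 < n" "u < v"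
    and lines: "\<And>k x. k < n \<Longrightarrow> x \<in> {u..v} \<Longrightarrow> traj k x = c k * x + d k"
    and no_upper_break: "\<And>x. u < x \<Longrightarrow> x < v \<Longrightarrow> \<not> upper_break {..<n} c d x"
    and no_lower_break: "\<And>x. u < x \<Longrightarrow> x < v \<Longrightarrow> \<not> upper_break {..<n} (- c) (- d) x"
  shows "affine_on (ideal_traj n traj) {u..v}"
proof -
  obtain g where g: "\<And>x. x \<in> {u..v} \<Longrightarrow> top_line {..<n} c d x g"
    using common_top_line[of "{..<n}" u v c d] no_upper_break \<open>0 < n\<close> \<open>u < v\<close> by auto
  obtain h where h: "\<And>x. x \<in> {u..v} \<Longrightarrow> top_line {..<n} (- c) (- d) x h"
    using common_top_line[of "{..<n}" u v "- c" "- d"] no_lower_break \<open>0 < n\<close> \<open>u < v\<close> by auto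
  have "ideal_traj n traj x = (c g + c h) / 2 * x + (d g + d h) / 2" if "x \<in> {u..v}" for x
  proof -
    have "upper_env n traj x = c g * x + d g"
      by (rule upper_env_eq_top_line) (use lines g that in auto)
    moreover have "lower_env n traj x = c h * x + d h"
      by (rule lower_env_eq_bottom_line) (use lines h that in auto)
    ultimately show ?thesis by (simp add: ideal_traj_def field_simps)
  qed
  then show ?thesis unfolding affine_on_def by blast
qed

lemma elem_intervals_ideal_traj_le:
  assumes "0 < n" "a \<le> b" "\<And>k. k < n \<Longrightarrow> affine_on (traj k) {a..b}"
  shows "elem_intervals (ideal_traj n traj) a b \<le> n + 1"
proof -
  obtain c d where lines: "\<And>k x. k < n \<Longrightarrow> x \<in> {a..b} \<Longrightarrow> traj k x = c k * x + d k"
    using affine_on_choice[of "{..<n}" traj "{a..b}"] assms(3) by auto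
  define B where "B = {x. upper_break {..<n} c d x} \<union> {x. upper_break {..<n} (- c) (- d) x}"
  define S where "S = {a, b} \<union> B \<inter> {a..b}"
  have "finite B" by (simp add: B_def finite_upper_breaks)
  have "card B \<le> n"
    using card_Un_le card_upper_lower_breaks_le[of "{..<n}" c d] unfolding B_def
    by (metis card_lessThan order_trans finite_lessThan)
  have "finite S" using \<open>finite B\<close> by (simp add: S_def)
  have "card S \<le> card {a, b} + card (B \<inter> {a..b})" unfolding S_def by (rule card_Un_le)
  also have "\<dots> \<le> 2 + card B"
    using \<open>finite B\<close> by (intro add_mono) (simp_all add: card_insert_if card_mono)
  finally have "card S \<le> n + 2" using \<open>card B \<le> n\<close> by linarith
  have "elem_intervals (ideal_traj n traj) a b \<le> card S - 1"
  proof (rule elem_intervals_le_card[OF \<open>finite S\<close>])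
    fix u v assume "u \<in> S" "v \<in> S" "u < v" and gap: "{u<..<v} \<inter> S = {}"
    then have "{u..v} \<subseteq> {a..b}" using \<open>a \<le> b\<close> by (auto simp: S_def)
    with gap show "affine_on (ideal_traj n traj) {u..v}"
      by (intro affine_on_ideal_traj[OF \<open>0 < n\<close> \<open>u < v\<close>]) (auto simp: lines S_def B_def)
  qed (use \<open>a \<le> b\<close> in \<open>auto simp: S_def\<close>)
  then show ?thesis using \<open>card S \<le> n + 2\<close> by linarith
qed

theorem mainTheorem1:
  fixes n \<tau> :: nat and t :: "nat \<Rightarrow> real" and traj :: "nat \<Rightarrow> real \<Rightarrow> real"
  assumes "n \<ge> 1"
    and "\<And>i. i < \<tau> \<Longrightarrow> t i < t (Suc i)"
    and "\<And>k i. k < n \<Longrightarrow> i < \<tau> \<Longrightarrow> affine_on (traj k) {t i..t (Suc i)}"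
  shows "(\<Sum>i<\<tau>. elem_intervals (ideal_traj n traj) (t i) (t (Suc i))) \<le> \<tau> * (n + 2)"
proof -
  have "elem_intervals (ideal_traj n traj) (t i) (t (Suc i)) \<le> n + 2" if "i < \<tau>" for i
    using elem_intervals_ideal_traj_le[of n "t i" "t (Suc i)" traj] assms that by fastforce
  then have "(\<Sum>i<\<tau>. elem_intervals (ideal_traj n traj) (t i) (t (Suc i))) \<le> (\<Sum>i<\<tau>. n + 2)"
    by (intro sum_mono) simp
  then show ?thesis by simp
qed

end
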